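(* Let $n\ge3$ and let $M^{2n-1}\subset U_n$ be the hypersurface consisting of non-degenerate $n$-gons with a fixed non-zero value of the area function $A$. Then at every point of $M$ the tangent space of $M$ is spanned by the vector fields tangent to the dual Birkhoff distribution $\mathcal F$ and their first commutators. Thus the bracket growth type of $\mathcal F$ on $M$ is $(n,2n-1)$.
   Context: $[\cdot,\cdot]$ is the determinant of two plane vectors; indices are cyclic. $G_n$ is the set of $n$-gons $(z_1,\dots,z_n)\in(\mathbb R^2)^n$ with $z_i\ne z_{i+1}$; $U_n\subset G_n$ is the open set of non-degenerate $n$-gons (no three consecutive vertices collinear). $A(z_1,\dots,z_n)=\sum_{i}[z_i,z_{i+1}]$ (twice the signed area). The dual Birkhoff distribution $\mathcal F$ on $G_n$: a tangent vector $W=(w_1,\dots,w_n)$ (velocities of the vertices) lies in $\mathcal F$ iff for each $i$ the induced motion of the line $z_iz_{i+1}$ is an infinitesimal rotation about the midpoint of $z_iz_{i+1}$; equivalently $[w_i+w_{i+1},z_{i+1}-z_i]=0$ for all $i$. $\mathcal F$ is $n$-dimensional and tangent to the level sets of $A$, hence defines a distribution on $M$. *)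

theory Defs
  imports "HOL-Analysis.Analysis"
begin

definition det2 :: "real^2 \<Rightarrow> real^2 \<Rightarrow> real" where
  "det2 u v = u$1 * v$2 - u$2 * v$1"

text \<open>The vertices of an n-gon are indexed by a finite type 'n with CARD('n) = n;
  cyclic order of indices is given by a cyclic successor permutation s (i+1 = s i).\<close>
definition cyclic_succ :: "('n::finite \<Rightarrow> 'n) \<Rightarrow> bool" where
  "cyclic_succ s \<longleftrightarrow> bij s \<and> (\<forall>i j. \<exists>k. (s ^^ k) i = j)"

text \<open>Twice the signed area A.\<close>
definition area :: "('n::finite \<Rightarrow> 'n) \<Rightarrow> real^2^'n \<Rightarrow> real" where
  "area s z = (\<Sum>i\<in>UNIV. det2 (z$i) (z$(s i)))"

definition polygon :: "('n::finite \<Rightarrow> 'n) \<Rightarrow> real^2^'n \<Rightarrow> bool" where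
  "polygon s z \<longleftrightarrow> (\<forall>i. z$i \<noteq> z$(s i))"

definition nondegenerate :: "('n::finite \<Rightarrow> 'n) \<Rightarrow> real^2^'n \<Rightarrow> bool" where
  "nondegenerate s z \<longleftrightarrow> polygon s z \<and>
     (\<forall>i. det2 (z$(s i) - z$i) (z$(s (s i)) - z$(s i)) \<noteq> 0)"

definition Mset :: "('n::finite \<Rightarrow> 'n) \<Rightarrow> real \<Rightarrow> (real^2^'n) set" where
  "Mset s c = {z. nondegenerate s z \<and> area s z = c}"

definition dual_birkhoff :: "('n::finite \<Rightarrow> 'n) \<Rightarrow> real^2^'n \<Rightarrow> (real^2^'n) set" where
  "dual_birkhoff s z = {W. \<forall>i. det2 (W$i + W$(s i)) (z$(s i) - z$i) = 0}"

definition tangent_M :: "('n::finite \<Rightarrow> 'n) \<Rightarrow> real^2^'n \<Rightarrow> (real^2^'n) set" where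
  "tangent_M s P = {W. frechet_derivative (area s) (at P) W = 0}"

text \<open>C^k maps on a set (intended for open S): partial derivatives in every
  direction are C^(k-1).\<close>
fun Ck_on :: "nat \<Rightarrow> 'a::euclidean_space set \<Rightarrow> ('a \<Rightarrow> 'b::euclidean_space) \<Rightarrow> bool" where
  "Ck_on 0 S f = continuous_on S f"
| "Ck_on (Suc k) S f = ((\<forall>x\<in>S. f differentiable (at x)) \<and>
      (\<forall>v. Ck_on k S (\<lambda>x. frechet_derivative f (at x) v)))"

definition smooth_on :: "'a::euclidean_space set \<Rightarrow> ('a \<Rightarrow> 'b::euclidean_space) \<Rightarrow> bool" where
  "smooth_on S f \<longleftrightarrow> (\<forall>k. Ck_on k S f)"

definition F_field :: "('n::finite \<Rightarrow> 'n) \<Rightarrow> (real^2^'n) set \<Rightarrow> (real^2^'n \<Rightarrow> real^2^'n) \<Rightarrow> bool" where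
  "F_field s S X \<longleftrightarrow> smooth_on S X \<and> (\<forall>z\<in>S. X z \<in> dual_birkhoff s z)"

definition lie_bracket :: "('a::euclidean_space \<Rightarrow> 'a) \<Rightarrow> ('a \<Rightarrow> 'a) \<Rightarrow> 'a \<Rightarrow> 'a" where
  "lie_bracket X Y z = frechet_derivative Y (at z) (X z) - frechet_derivative X (at z) (Y z)"

end

theory Submission
  imports Defs
begin

text \<open>
  Let \<open>\<phi>\<^sub>k(W) = [w\<^sub>k + w\<^sub>k\<^sub>+\<^sub>1, z\<^sub>k\<^sub>+\<^sub>1 - z\<^sub>k]\<close> (\<open>midpoint_drift\<close>), so that \<open>\<F> = ker \<phi>\<close>. Up to telescoping terms
  \<open>dA = \<Sum>\<^sub>k \<phi>\<^sub>k\<close>, hence \<open>\<F> \<subseteq> TM\<close>. Differentiating \<open>\<phi>(Y) = 0\<close> for fields \<open>X, Y\<close> tangent to \<open>\<F>\<close>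
  gives \<open>\<phi>\<^sub>k[X,Y] = 2([x\<^sub>k\<^sub>+\<^sub>1, y\<^sub>k\<^sub>+\<^sub>1] - [x\<^sub>k, y\<^sub>k])\<close>, whose sum over \<open>k\<close> telescopes to zero, so
  brackets lie in \<open>TM\<close> as well.

  Conversely, at a non-degenerate polygon the polynomial fields \<open>V\<^sub>j\<close>, which move only \<open>z\<^sub>j\<close> and
  \<open>z\<^sub>j\<^sub>+\<^sub>1\<close>, form a frame of \<open>\<F>\<close>, and \<open>\<phi>[V\<^sub>j, V\<^sub>j\<^sub>+\<^sub>1]\<close> is a non-zero multiple of
  \<open>e\<^sub>j - e\<^sub>j\<^sub>+\<^sub>1\<close>. Going once around the polygon, these differences span the hyperplane
  \<open>\<Sum> = 0\<close>, which is \<open>\<phi>(TM)\<close>; together with \<open>ker \<phi> = \<F>\<close> this yields all of \<open>TM = ker dA\<close>,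
  a hyperplane because \<open>dA(P) P = 2A(P) \<noteq> 0\<close>.
\<close>

section \<open>Smoothness of polynomial maps\<close>

lemma real_polynomial_function_has_derivative:
  assumes "real_polynomial_function f"
  shows "\<exists>f'. (\<forall>x. (f has_derivative f' x) (at x)) \<and> (\<forall>v. real_polynomial_function (\<lambda>x. f' x v))"
  using assms
proof induction
  case (linear f)
  then show ?case
    by (intro exI[of _ "\<lambda>x. f"]) (auto intro: bounded_linear_imp_has_derivative)
next
  case (const c)
  show ?case
    by (intro exI[of _ "\<lambda>x v. 0"]) auto
next
  case (add f g)
  then obtain f' g' where "\<forall>x. (f has_derivative f' x) (at x)" "\<forall>v. real_polynomial_function (\<lambda>x. f' x v)"
    and "\<forall>x. (g has_derivative g' x) (at x)" "\<forall>v. real_polynomial_function (\<lambda>x. g' x v)"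
    by blast
  then show ?case
    by (intro exI[of _ "\<lambda>x v. f' x v + g' x v"]) (auto intro: has_derivative_add)
next
  case (mult f g)
  then obtain f' g' where "\<forall>x. (f has_derivative f' x) (at x)" "\<forall>v. real_polynomial_function (\<lambda>x. f' x v)"
    and "\<forall>x. (g has_derivative g' x) (at x)" "\<forall>v. real_polynomial_function (\<lambda>x. g' x v)"
    by blast
  with mult.hyps show ?case
    by (intro exI[of _ "\<lambda>x v. f x * g' x v + f' x v * g x"]) (auto intro!: has_derivative_mult real_polynomial_function.intros(3,4))
qed

lemma polynomial_function_has_derivative:
  fixes f :: "'a::real_normed_vector \<Rightarrow> 'b::euclidean_space"
  assumes "polynomial_function f"
  obtains f' where "\<And>x. (f has_derivative f' x) (at x)"
    and "\<And>v. polynomial_function (\<lambda>x. f' x v)"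
proof -
  have "\<forall>b\<in>Basis. \<exists>d. (\<forall>x. ((\<lambda>x. f x \<bullet> b) has_derivative d x) (at x))
          \<and> (\<forall>v. real_polynomial_function (\<lambda>x. d x v))"
    using assms real_polynomial_function_has_derivative
    unfolding polynomial_function_iff_Basis_inner by blast
  then obtain d where d: "\<And>b x. b \<in> Basis \<Longrightarrow> ((\<lambda>x. f x \<bullet> b) has_derivative d b x) (at x)"
    and dpoly: "\<And>b v. b \<in> Basis \<Longrightarrow> real_polynomial_function (\<lambda>x. d b x v)"
    by metis
  define f' where "f' x v = (\<Sum>b\<in>Basis. d b x v *\<^sub>R b)" for x v
  show thesis
  proof
    fix x
    have "((\<lambda>x. \<Sum>b\<in>Basis. (f x \<bullet> b) *\<^sub>R b) has_derivative f' x) (at x)"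
      unfolding f'_def by (intro has_derivative_sum has_derivative_scaleR_left d)
    then show "(f has_derivative f' x) (at x)"
      by (simp add: euclidean_representation)
    show "polynomial_function (\<lambda>x. f' x v)" for v
      unfolding f'_def using dpoly
      by (intro polynomial_function_sum) (auto simp: real_polynomial_function_eq)
  qed
qed

lemma polynomial_function_smooth_on:
  fixes f :: "'a::euclidean_space \<Rightarrow> 'b::euclidean_space"
  assumes "polynomial_function f"
  shows "smooth_on S f"
proof -
  have "Ck_on k S f" if "polynomial_function f" for k and f :: "'a \<Rightarrow> 'b"
    using that
  proof (induction k arbitrary: f)
    case 0
    then obtain f' where "\<And>x. (f has_derivative f' x) (at x)"
      by (metis polynomial_function_has_derivative)
    then show ?case
      by (metis Ck_on.simps(1) differentiable_def differentiable_imp_continuous_on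
          differentiable_at_imp_differentiable_on)
  next
    case (Suc k)
    then obtain f' where f': "\<And>x. (f has_derivative f' x) (at x)"
      and "\<And>v. polynomial_function (\<lambda>x. f' x v)"
      by (metis polynomial_function_has_derivative)
    moreover have "frechet_derivative f (at x) = f' x" for x
      using f' by (metis frechet_derivative_at)
    ultimately show ?case
      using Suc.IH by (auto simp: differentiable_def)
  qed
  then show ?thesis
    using assms by (simp add: smooth_on_def)
qed

lemma polynomial_function_vec_lambda:
  fixes f :: "'a::real_normed_vector \<Rightarrow> 'n::finite \<Rightarrow> 'b::euclidean_space"
  assumes "\<And>i. polynomial_function (\<lambda>x. f x i)"
  shows "polynomial_function (\<lambda>x. \<chi> i. f x i)"
  unfolding polynomial_function_iff_Basis_inner
proof
  fix b :: "'b ^ 'n" assume "b \<in> Basis"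
  then obtain i u where "b = axis i u" and "u \<in> Basis"
    by (auto simp: Basis_vec_def)
  then show "real_polynomial_function (\<lambda>x. (\<chi> i. f x i) \<bullet> b)"
    using assms[of i] by (simp add: inner_axis polynomial_function_iff_Basis_inner)
qed

lemma real_polynomial_function_det2:
  assumes "polynomial_function f" and "polynomial_function g"
  shows "real_polynomial_function (\<lambda>x. det2 (f x) (g x))"
proof -
  have "real_polynomial_function (\<lambda>x. f x $ k)" "real_polynomial_function (\<lambda>x. g x $ k)" for k
    using assms bounded_linear_vec_nth[of k]
    by (auto simp: polynomial_function_def o_def)
  then show ?thesis
    unfolding det2_def by (intro real_polynomial_function_diff real_polynomial_function.intros(4))
qed

section \<open>Cyclic successors\<close>

lemma cyclic_succ_bij: "cyclic_succ s \<Longrightarrow> bij s"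
  by (simp add: cyclic_succ_def)

lemma cyclic_succ_reaches: "cyclic_succ s \<Longrightarrow> \<exists>k. (s ^^ k) i = j"
  by (simp add: cyclic_succ_def)

lemma cyclic_succ_f_inv [simp]: "cyclic_succ s \<Longrightarrow> s (inv s i) = i"
  by (simp add: cyclic_succ_bij bij_is_inj bij_is_surj surj_f_inv_f)

lemma cyclic_succ_inv_f [simp]: "cyclic_succ s \<Longrightarrow> inv s (s i) = i"
  by (simp add: cyclic_succ_bij bij_is_inj bij_is_surj surj_f_inv_f)

lemma cyclic_succ_eq_iff [simp]: "cyclic_succ s \<Longrightarrow> s i = s j \<longleftrightarrow> i = j"
  by (metis cyclic_succ_inv_f)

lemma sum_cyclic_succ_reindex:
  fixes s :: "'n::finite \<Rightarrow> 'n"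
  assumes "cyclic_succ s"
  shows "(\<Sum>k\<in>UNIV. f (s k)) = (\<Sum>k\<in>UNIV. f k)"
  using sum.reindex_bij_betw[of s UNIV UNIV f] cyclic_succ_bij[OF assms]
  by (simp add: bij_def bij_betw_def)

lemma card_le_cyclic_period:
  fixes s :: "'n::finite \<Rightarrow> 'n"
  assumes "cyclic_succ s" and "(s ^^ m) i = i" and "0 < m"
  shows "CARD('n) \<le> m"
proof -
  have "UNIV \<subseteq> (\<lambda>k. (s ^^ k) i) ` {..<m}"
  proof
    fix j
    obtain k where "(s ^^ k) i = j"
      using cyclic_succ_reaches[OF assms(1)] by blast
    then have "(s ^^ (k mod m)) i = j"
      using funpow_mod_eq[OF assms(2)] by simp
    then show "j \<in> (\<lambda>k. (s ^^ k) i) ` {..<m}"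
      using assms(3) by auto
  qed
  then show ?thesis
    by (metis card_image_le card_lessThan card_mono dual_order.trans finite_imageI finite_lessThan)
qed

lemma cyclic_succ_neq:
  fixes s :: "'n::finite \<Rightarrow> 'n"
  assumes "cyclic_succ s" and "CARD('n) \<ge> 2"
  shows "s i \<noteq> i"
  using card_le_cyclic_period[OF assms(1), of 1 i] assms(2) by auto

lemma cyclic_succ_neq2:
  fixes s :: "'n::finite \<Rightarrow> 'n"
  assumes "cyclic_succ s" and "CARD('n) \<ge> 3"
  shows "s (s i) \<noteq> i"
  using card_le_cyclic_period[OF assms(1), of 2 i] assms(2) by (auto simp: numeral_2_eq_2)

section \<open>Linear algebra\<close>

lemma dim_kernel_functional:
  fixes f :: "'a::euclidean_space \<Rightarrow> real"
  assumes "linear f" and "f \<noteq> (\<lambda>x. 0)"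
  shows "dim {x. f x = 0} = DIM('a) - 1"
proof -
  define a where "a = adjoint f 1"
  have f_eq: "f x = a \<bullet> x" for x
    using adjoint_works[OF assms(1), of x 1] by (simp add: a_def inner_commute)
  then have "a \<noteq> 0"
    using assms(2) by auto
  then show ?thesis
    using dim_hyperplane[of a] by (simp add: f_eq)
qed

lemma linear_vimage_span_subset:
  assumes "linear f" and "subspace T" and "{x. f x = 0} \<subseteq> T" and "B \<subseteq> f ` T"
  shows "{x. f x \<in> span B} \<subseteq> T"
proof
  fix x assume "x \<in> {x. f x \<in> span B}"
  have "span B \<subseteq> f ` T"
    using assms(4) linear_subspace_image[OF assms(1,2)] by (rule span_minimal)
  then obtain u where "u \<in> T" and "f x = f u"
    using \<open>x \<in> _\<close> by blast
  then have "x - u \<in> T"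
    using assms(1,3) by (auto simp: linear_diff)
  then show "x \<in> T"
    using \<open>u \<in> T\<close> assms(2) by (metis diff_add_cancel subspace_add)
qed

lemma zero_sum_in_span_cyclic_differences:
  fixes x :: "real ^ 'n::finite"
  assumes "cyclic_succ s" and "(\<Sum>i\<in>UNIV. x $ i) = 0"
  shows "x \<in> span (range (\<lambda>j. axis j 1 - axis (s j) 1))"
proof -
  let ?D = "span (range (\<lambda>j. axis j (1::real) - axis (s j) 1))"
  have chain: "axis i 1 - axis ((s ^^ m) i) 1 \<in> ?D" for i m
  proof (induction m)
    case 0
    then show ?case by (simp add: span_zero)
  next
    case (Suc m)
    have "axis ((s ^^ m) i) 1 - axis (s ((s ^^ m) i)) 1 \<in> ?D"
      by (intro span_base) auto
    from span_add[OF Suc.IH this] show ?case by simp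
  qed
  fix k :: 'n
  have "axis i 1 - axis k 1 \<in> ?D" for i
    using chain cyclic_succ_reaches[OF assms(1), of i k] by metis
  then have "(\<Sum>i\<in>UNIV. x $ i *\<^sub>R (axis i 1 - axis k 1)) \<in> ?D"
    by (intro span_sum span_scale)
  also have "(\<Sum>i\<in>UNIV. x $ i *\<^sub>R (axis i 1 - axis k 1)) = x"
    using assms(2) basis_expansion[of x]
    by (simp add: scaleR_diff_right sum_subtractf flip: scaleR_sum_left) (simp add: scalar_mult_eq_scaleR)
  finally show ?thesis .
qed

lemma det2_scaleR_left: "det2 (a *\<^sub>R u) w = a * det2 u w"
  and det2_self: "det2 u u = 0"
  by (simp_all add: det2_def algebra_simps)

lemma det2_cramer:
  assumes "det2 a b \<noteq> 0"
  shows "w = (det2 w b / det2 a b) *\<^sub>R a + (det2 a w / det2 a b) *\<^sub>R b"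
proof -
  have "det2 a b *\<^sub>R w = det2 w b *\<^sub>R a + det2 a w *\<^sub>R b"
    unfolding vec_eq_iff forall_2 det2_def by (simp add: algebra_simps)
  have "w = (1 / det2 a b) *\<^sub>R (det2 a b *\<^sub>R w)"
    using assms by simp
  also have "\<dots> = (det2 w b / det2 a b) *\<^sub>R a + (det2 a w / det2 a b) *\<^sub>R b"
    unfolding \<open>det2 a b *\<^sub>R w = _\<close> by (simp add: scaleR_add_right)
  finally show ?thesis .
qed

lemma det2_independent:
  assumes "det2 a b \<noteq> 0" and "x *\<^sub>R a + y *\<^sub>R b = 0"
  shows "x = 0"
proof -
  have "x * det2 a b = det2 (x *\<^sub>R a + y *\<^sub>R b) b"
    by (simp add: det2_def algebra_simps)
  then show ?thesis
    using assms by (simp add: det2_def)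
qed

section \<open>The area form and the midpoint drift\<close>

definition side :: "('n::finite \<Rightarrow> 'n) \<Rightarrow> real^2^'n \<Rightarrow> 'n \<Rightarrow> real^2" where
  "side s z i = z$(s i) - z$i"

definition turn :: "('n::finite \<Rightarrow> 'n) \<Rightarrow> real^2^'n \<Rightarrow> 'n \<Rightarrow> real" where
  "turn s z i = det2 (side s z (inv s i)) (side s z i)"

definition midpoint_drift :: "('n::finite \<Rightarrow> 'n) \<Rightarrow> real^2^'n \<Rightarrow> real^2^'n \<Rightarrow> real^'n" where
  "midpoint_drift s z W = (\<chi> k. det2 (W$k + W$(s k)) (side s z k))"

lemma nondegenerate_turn_nonzero:
  assumes "cyclic_succ s" and "nondegenerate s z"
  shows "turn s z i \<noteq> 0"
  using assms(2) unfolding nondegenerate_def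
  by (metis assms(1) cyclic_succ_f_inv side_def turn_def)

lemma linear_midpoint_drift: "linear (midpoint_drift s z)"
  by (rule linearI) (simp_all add: midpoint_drift_def vec_eq_iff det2_def algebra_simps)

lemma dual_birkhoff_eq_kernel: "dual_birkhoff s z = {W. midpoint_drift s z W = 0}"
  by (simp add: dual_birkhoff_def midpoint_drift_def side_def vec_eq_iff)

lemma subspace_dual_birkhoff: "subspace (dual_birkhoff s z)"
  unfolding dual_birkhoff_eq_kernel by (rule linear_subspace_kernel[OF linear_midpoint_drift])

lemma has_derivative_vec_nth_nth [derivative_intros]:
  "((\<lambda>z::real^2^'n::finite. z$i$b) has_derivative (\<lambda>v. v$i$b)) F"
  by (intro bounded_linear_imp_has_derivative
      bounded_linear_compose[OF bounded_linear_vec_nth bounded_linear_vec_nth])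

lemma has_derivative_area:
  "(area s has_derivative (\<lambda>W. \<Sum>i\<in>UNIV. det2 (W$i) (z$(s i)) + det2 (z$i) (W$(s i)))) (at z)"
  unfolding area_def[abs_def] det2_def
  by (auto intro!: derivative_eq_intros simp: algebra_simps)

text \<open>\<open>\<phi>\<^sub>k(W)\<close> and the \<open>k\<close>-th term of \<open>dA(W)\<close> differ by \<open>[w\<^sub>k\<^sub>+\<^sub>1, z\<^sub>k\<^sub>+\<^sub>1] - [w\<^sub>k, z\<^sub>k]\<close>.\<close>
lemma frechet_derivative_area:
  fixes s :: "'n::finite \<Rightarrow> 'n"
  assumes "cyclic_succ s"
  shows "frechet_derivative (area s) (at z) = (\<lambda>W. \<Sum>k\<in>UNIV. midpoint_drift s z W $ k)"
proof -
  have "(\<Sum>k\<in>UNIV. midpoint_drift s z W $ k)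
      = (\<Sum>k\<in>UNIV. det2 (W$k) (z$(s k)) + det2 (z$k) (W$(s k)))" for W
  proof -
    let ?g = "\<lambda>k. det2 (W$k) (z$k)"
    have "midpoint_drift s z W $ k
        = (det2 (W$k) (z$(s k)) + det2 (z$k) (W$(s k))) + (?g (s k) - ?g k)" for k
      by (simp add: midpoint_drift_def side_def det2_def algebra_simps)
    then show ?thesis
      using sum_cyclic_succ_reindex[OF assms, of ?g] by (simp add: sum.distrib sum_subtractf)
  qed
  then show ?thesis
    by (simp add: frechet_derivative_at[OF has_derivative_area, symmetric])
qed

lemma linear_frechet_derivative_area: "linear (frechet_derivative (area s) (at z))"
proof -
  have "area s differentiable (at z)"
    using has_derivative_area by (rule differentiableI)
  then show ?thesis
    by (rule has_derivative_linear[OF frechet_derivative_works[THEN iffD1]])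
qed

lemma sum_midpoint_drift_self: "(\<Sum>k\<in>UNIV. midpoint_drift s z z $ k) = 2 * area s z"
  by (simp add: midpoint_drift_def side_def area_def det2_def sum_distrib_left algebra_simps)

lemma tangent_M_eq:
  assumes "cyclic_succ s"
  shows "tangent_M s z = {W. (\<Sum>k\<in>UNIV. midpoint_drift s z W $ k) = 0}"
  by (simp add: tangent_M_def frechet_derivative_area[OF assms])

lemma dual_birkhoff_subset_tangent_M:
  "cyclic_succ s \<Longrightarrow> dual_birkhoff s z \<subseteq> tangent_M s z"
  by (simp add: tangent_M_eq dual_birkhoff_eq_kernel subset_eq)

section \<open>Brackets of fields tangent to the distribution\<close>

lemma F_field_has_derivative:
  assumes "F_field s S Y" and "z \<in> S"
  shows "(Y has_derivative frechet_derivative Y (at z)) (at z)"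
proof -
  have "Ck_on (Suc 0) S Y"
    using assms(1) unfolding F_field_def smooth_on_def by blast
  then show ?thesis
    using assms(2) frechet_derivative_works by auto
qed

text \<open>Differentiating the identity \<open>midpoint_drift s z (Y z) = 0\<close>, which holds on the open set \<open>S\<close>.\<close>
lemma F_field_derivative_drift:
  assumes "open S" and "P \<in> S" and "F_field s S Y"
  shows "midpoint_drift s P (frechet_derivative Y (at P) v) $ k
       + det2 (Y P $ k + Y P $ s k) (side s v k) = 0"
proof -
  let ?D = "frechet_derivative Y (at P)"
  have Y': "((\<lambda>z. Y z $ i $ b) has_derivative (\<lambda>v. ?D v $ i $ b)) (at P)" for i b
    using F_field_has_derivative[OF assms(3,2)]
    by (rule bounded_linear.has_derivative[OF bounded_linear_compose[OF bounded_linear_vec_nth bounded_linear_vec_nth]])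
  define g where "g z = midpoint_drift s z (Y z) $ k" for z
  have "(g has_derivative (\<lambda>v. midpoint_drift s P (?D v) $ k
       + det2 (Y P $ k + Y P $ s k) (side s v k))) (at P)"
    unfolding g_def[abs_def] midpoint_drift_def side_def det2_def
    by (auto intro!: derivative_eq_intros Y' simp: algebra_simps)
  moreover have "(g has_derivative (\<lambda>v. 0)) (at P)"
  proof (rule has_derivative_transform_within_open[OF _ assms(1,2)])
    show "((\<lambda>z. 0) has_derivative (\<lambda>v. 0)) (at P)"
      by simp
    show "0 = g z" if "z \<in> S" for z
      using assms(3) that unfolding F_field_def dual_birkhoff_eq_kernel g_def by auto
  qed
  ultimately have "(\<lambda>v. midpoint_drift s P (?D v) $ k + det2 (Y P $ k + Y P $ s k) (side s v k))
      = (\<lambda>v. 0)"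
    by (rule has_derivative_unique)
  then show ?thesis
    by meson
qed

lemma midpoint_drift_lie_bracket:
  assumes "open S" and "P \<in> S" and "F_field s S X" and "F_field s S Y"
  shows "midpoint_drift s P (lie_bracket X Y P) $ k
       = 2 * (det2 (X P $ s k) (Y P $ s k) - det2 (X P $ k) (Y P $ k))"
  using F_field_derivative_drift[OF assms(1,2,4), of "X P" k]
    F_field_derivative_drift[OF assms(1,2,3), of "Y P" k]
  unfolding lie_bracket_def midpoint_drift_def side_def det2_def
  by (simp add: algebra_simps)

lemma lie_bracket_in_tangent_M:
  fixes s :: "'n::finite \<Rightarrow> 'n"
  assumes "cyclic_succ s" and "open S" and "P \<in> S" and "F_field s S X" and "F_field s S Y"
  shows "lie_bracket X Y P \<in> tangent_M s P"
proof -
  let ?\<psi> = "\<lambda>k. det2 (X P $ k) (Y P $ k)"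
  have "(\<Sum>k\<in>UNIV. midpoint_drift s P (lie_bracket X Y P) $ k)
      = 2 * ((\<Sum>k\<in>UNIV. ?\<psi> (s k)) - (\<Sum>k\<in>UNIV. ?\<psi> k))"
    by (simp add: midpoint_drift_lie_bracket[OF assms(2-5)] sum_distrib_left sum_subtractf)
  also have "\<dots> = 0"
    using sum_cyclic_succ_reindex[OF assms(1), of ?\<psi>] by simp
  finally show ?thesis
    by (simp add: tangent_M_eq[OF assms(1)])
qed

section \<open>A global frame of the distribution\<close>

text \<open>\<open>birkhoff_field s j\<close> moves only \<open>z\<^sub>j\<close> and \<open>z\<^sub>j\<^sub>+\<^sub>1\<close>, along the sides \<open>z\<^sub>j\<^sub>-\<^sub>1z\<^sub>j\<close> and
  \<open>z\<^sub>j\<^sub>+\<^sub>1z\<^sub>j\<^sub>+\<^sub>2\<close>; the weights are chosen so that the side \<open>z\<^sub>jz\<^sub>j\<^sub>+\<^sub>1\<close> turns about its midpoint.\<close>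
definition birkhoff_field :: "('n::finite \<Rightarrow> 'n) \<Rightarrow> 'n \<Rightarrow> real^2^'n \<Rightarrow> real^2^'n" where
  "birkhoff_field s j z = (\<chi> k.
     if k = j then turn s z (s j) *\<^sub>R side s z (inv s j)
     else if k = s j then turn s z j *\<^sub>R side s z (s j)
     else 0)"

lemma polynomial_function_birkhoff_field: "polynomial_function (birkhoff_field s j)"
proof -
  have side: "polynomial_function (\<lambda>z. side s z i)" for i
    unfolding side_def
    by (intro polynomial_function_diff polynomial_function_bounded_linear bounded_linear_vec_nth)
  have turn: "polynomial_function (\<lambda>z. turn s z i)" for i
    unfolding turn_def real_polynomial_function_eq[symmetric]
    by (intro real_polynomial_function_det2 side)
  show ?thesis
    unfolding birkhoff_field_def
  proof (intro polynomial_function_vec_lambda)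
    fix k
    show "polynomial_function (\<lambda>z.
        if k = j then turn s z (s j) *\<^sub>R side s z (inv s j)
        else if k = s j then turn s z j *\<^sub>R side s z (s j) else 0)"
      by (cases "k = j"; cases "k = s j") (simp_all add: polynomial_function_mult side turn)
  qed
qed

lemma birkhoff_field_in_dual_birkhoff:
  fixes s :: "'n::finite \<Rightarrow> 'n"
  assumes cs: "cyclic_succ s" and "CARD('n) \<ge> 3"
  shows "birkhoff_field s j z \<in> dual_birkhoff s z"
proof -
  let ?V = "birkhoff_field s j z"
  have sj: "s j \<noteq> j" and ssj: "s (s j) \<noteq> j"
    using cyclic_succ_neq[OF cs] cyclic_succ_neq2[OF cs] assms(2) by auto
  have "det2 (?V $ k + ?V $ s k) (side s z k) = 0" for k
  proof -
    consider "k = j" | "k = s j" | "s k = j" | "k \<noteq> j" "k \<noteq> s j" "s k \<noteq> j"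
      by blast
    then show ?thesis
    proof cases
      case 1
      then show ?thesis
        using sj cs by (simp add: birkhoff_field_def turn_def det2_def algebra_simps)
    next
      case 2
      then show ?thesis
        using sj ssj cs by (simp add: birkhoff_field_def det2_scaleR_left det2_self)
    next
      case 3
      then have "k = inv s j" and "k \<noteq> s j" and "k \<noteq> j"
        using cs sj ssj by auto
      then show ?thesis
        using 3 sj cs by (simp add: birkhoff_field_def det2_scaleR_left det2_self)
    next
      case 4
      then show ?thesis
        using cs by (simp add: birkhoff_field_def det2_def)
    qed
  qed
  then show ?thesis
    by (simp add: dual_birkhoff_eq_kernel midpoint_drift_def vec_eq_iff)
qed

lemma F_field_birkhoff_field:
  fixes s :: "'n::finite \<Rightarrow> 'n"
  assumes "cyclic_succ s" and "CARD('n) \<ge> 3"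
  shows "F_field s S (birkhoff_field s j)"
  unfolding F_field_def
  using polynomial_function_smooth_on[OF polynomial_function_birkhoff_field]
    birkhoff_field_in_dual_birkhoff[OF assms] by blast

lemma sum_birkhoff_field_nth:
  fixes s :: "'n::finite \<Rightarrow> 'n"
  assumes cs: "cyclic_succ s" and "CARD('n) \<ge> 2"
  shows "(\<Sum>j\<in>UNIV. c j *\<^sub>R birkhoff_field s j z) $ k
     = (c k * turn s z (s k)) *\<^sub>R side s z (inv s k)
       + (c (inv s k) * turn s z (inv s k)) *\<^sub>R side s z k"
proof -
  have "s k \<noteq> k" and "inv s k \<noteq> k"
    using cyclic_succ_neq[OF assms] cyclic_succ_f_inv[OF cs] by metis+
  then have "c j *\<^sub>R (birkhoff_field s j z $ k)
      = (if j = k then (c k * turn s z (s k)) *\<^sub>R side s z (inv s k) else 0)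
        + (if j = inv s k then (c (inv s k) * turn s z (inv s k)) *\<^sub>R side s z k else 0)" for j
    using cs by (auto simp: birkhoff_field_def)
  then show ?thesis
    by (simp add: sum.distrib)
qed

lemma det2_birkhoff_fields_consecutive:
  fixes s :: "'n::finite \<Rightarrow> 'n"
  assumes cs: "cyclic_succ s" and "CARD('n) \<ge> 3" and "k \<noteq> s j"
  shows "det2 (birkhoff_field s j z $ k) (birkhoff_field s (s j) z $ k) = 0"
  using assms cyclic_succ_neq[OF cs, of j] cyclic_succ_neq2[OF cs, of j]
  by (auto simp: birkhoff_field_def det2_def)

context
  fixes s :: "'n::finite \<Rightarrow> 'n" and P :: "real^2^'n"
  assumes cs: "cyclic_succ s" and n3: "CARD('n) \<ge> 3" and nd: "nondegenerate s P"
begin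

lemmas turn_nonzero = nondegenerate_turn_nonzero[OF cs nd]

lemma sum_birkhoff_field_eq_0D:
  assumes "(\<Sum>j\<in>UNIV. c j *\<^sub>R birkhoff_field s j P) = 0"
  shows "c k = 0"
proof -
  have "(c k * turn s P (s k)) *\<^sub>R side s P (inv s k) + (c (inv s k) * turn s P (inv s k)) *\<^sub>R side s P k = 0"
    using sum_birkhoff_field_nth[OF cs, of c P k] n3 assms by simp
  then have "c k * turn s P (s k) = 0"
    using turn_nonzero[of k] det2_independent unfolding turn_def by blast
  then show ?thesis
    using turn_nonzero[of "s k"] by simp
qed

lemma dual_birkhoff_eq_sum_birkhoff_field:
  assumes W: "W \<in> dual_birkhoff s P"
  shows "W = (\<Sum>j\<in>UNIV. (det2 (W$j) (side s P j) / (turn s P j * turn s P (s j)))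
                           *\<^sub>R birkhoff_field s j P)"
proof (subst vec_eq_iff, intro allI)
  fix k
  let ?a = "side s P (inv s k)" and ?b = "side s P k"
  have turn_k: "turn s P k = det2 ?a ?b"
    by (simp add: turn_def)
  have "det2 (W $ inv s k + W $ s (inv s k)) ?a = 0"
    using W unfolding dual_birkhoff_def side_def by blast
  then have constraint: "det2 (W $ inv s k) ?a = det2 ?a (W $ k)"
    using cs by (simp add: det2_def algebra_simps)
  have ab: "det2 ?a ?b \<noteq> 0"
    using turn_nonzero[of k] turn_k by simp
  have c1: "det2 (W$k) ?b / (turn s P k * turn s P (s k)) * turn s P (s k) = det2 (W$k) ?b / det2 ?a ?b"
    using turn_nonzero turn_k by simp
  have c2: "det2 (W $ inv s k) ?a / (turn s P (inv s k) * turn s P (s (inv s k))) * turn s P (inv s k)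
      = det2 ?a (W $ k) / det2 ?a ?b"
    using turn_nonzero turn_k constraint cs by simp
  have n2: "CARD('n) \<ge> 2"
    using n3 by simp
  show "W $ k = (\<Sum>j\<in>UNIV. (det2 (W$j) (side s P j) / (turn s P j * turn s P (s j)))
                           *\<^sub>R birkhoff_field s j P) $ k"
    unfolding sum_birkhoff_field_nth[OF cs n2] c1 c2 by (rule det2_cramer[OF ab])
qed

lemma dual_birkhoff_subset_span_birkhoff_fields:
  "dual_birkhoff s P \<subseteq> span (range (\<lambda>j. birkhoff_field s j P))"
proof
  fix W assume "W \<in> dual_birkhoff s P"
  then have "W = (\<Sum>j\<in>UNIV. (det2 (W$j) (side s P j) / (turn s P j * turn s P (s j)))
                           *\<^sub>R birkhoff_field s j P)"
    by (rule dual_birkhoff_eq_sum_birkhoff_field)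
  also have "\<dots> \<in> span (range (\<lambda>j. birkhoff_field s j P))"
    by (intro span_sum span_scale span_base rangeI)
  finally show "W \<in> span (range (\<lambda>j. birkhoff_field s j P))" .
qed

lemma dim_dual_birkhoff: "dim (dual_birkhoff s P) = CARD('n)"
proof -
  define L where "L c = (\<Sum>j\<in>UNIV. c $ j *\<^sub>R birkhoff_field s j P)" for c :: "real^'n"
  have "linear L"
    unfolding L_def by (rule linearI) (simp_all add: scaleR_add_left sum.distrib scaleR_sum_right)
  moreover have "inj L"
    unfolding linear_injective_0[OF \<open>linear L\<close>] L_def
    using sum_birkhoff_field_eq_0D by (auto simp: vec_eq_iff)
  moreover have "range L = dual_birkhoff s P"
  proof
    show "range L \<subseteq> dual_birkhoff s P"
      unfolding L_def using subspace_dual_birkhoff birkhoff_field_in_dual_birkhoff[OF cs n3]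
      by (auto intro!: subspace_sum subspace_scale)
    show "dual_birkhoff s P \<subseteq> range L"
      unfolding L_def using dual_birkhoff_eq_sum_birkhoff_field
      by (auto intro!: image_eqI[where x = "\<chi> j. _ j"])
  qed
  ultimately show ?thesis
    using dim_image_eq[of L UNIV] by simp
qed

lemma det2_birkhoff_fields_consecutive_nonzero:
  "det2 (birkhoff_field s j P $ s j) (birkhoff_field s (s j) P $ s j) \<noteq> 0"
proof -
  have "det2 (birkhoff_field s j P $ s j) (birkhoff_field s (s j) P $ s j)
      = - turn s P j * turn s P (s (s j)) * turn s P (s j)"
    using cs cyclic_succ_neq[OF cs, of j] n3
    by (simp add: birkhoff_field_def turn_def det2_def algebra_simps)
  then show ?thesis
    using turn_nonzero by simp
qed

lemma midpoint_drift_consecutive_bracket: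
  "midpoint_drift s P (lie_bracket (birkhoff_field s j) (birkhoff_field s (s j)) P)
     = (2 * det2 (birkhoff_field s j P $ s j) (birkhoff_field s (s j) P $ s j))
         *\<^sub>R (axis j 1 - axis (s j) 1)"
proof (subst vec_eq_iff, intro allI)
  fix k
  let ?\<psi> = "\<lambda>k. det2 (birkhoff_field s j P $ k) (birkhoff_field s (s j) P $ k)"
  have \<psi>: "?\<psi> k = (if k = s j then ?\<psi> (s j) else 0)" for k
    using det2_birkhoff_fields_consecutive[OF cs n3] by simp
  show "midpoint_drift s P (lie_bracket (birkhoff_field s j) (birkhoff_field s (s j)) P) $ k
     = ((2 * ?\<psi> (s j)) *\<^sub>R (axis j 1 - axis (s j) 1)) $ k"
    unfolding midpoint_drift_lie_bracket[OF open_UNIV UNIV_I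
        F_field_birkhoff_field[OF cs n3] F_field_birkhoff_field[OF cs n3]]
    by (subst (1 2) \<psi>) (auto simp: axis_def cs)
qed

end

section \<open>Bracket generation\<close>

definition F_values :: "('n::finite \<Rightarrow> 'n) \<Rightarrow> real^2^'n \<Rightarrow> (real^2^'n) set" where
  "F_values s P = {X P | X S. open S \<and> P \<in> S \<and> F_field s S X}"

definition F_brackets :: "('n::finite \<Rightarrow> 'n) \<Rightarrow> real^2^'n \<Rightarrow> (real^2^'n) set" where
  "F_brackets s P =
     {lie_bracket X Y P | X Y S. open S \<and> P \<in> S \<and> F_field s S X \<and> F_field s S Y}"

lemma span_F_values_F_brackets_subset_tangent_M:
  assumes "cyclic_succ s"
  shows "span (F_values s P \<union> F_brackets s P) \<subseteq> tangent_M s P"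
proof (rule span_minimal)
  show "subspace (tangent_M s P)"
    unfolding tangent_M_def by (rule linear_subspace_kernel[OF linear_frechet_derivative_area])
  have "F_values s P \<subseteq> dual_birkhoff s P"
    unfolding F_values_def F_field_def by blast
  moreover have "F_brackets s P \<subseteq> tangent_M s P"
    unfolding F_brackets_def using lie_bracket_in_tangent_M[OF assms] by blast
  ultimately show "F_values s P \<union> F_brackets s P \<subseteq> tangent_M s P"
    using dual_birkhoff_subset_tangent_M[OF assms] by blast
qed

lemma tangent_M_subset_span_F_values_F_brackets:
  fixes s :: "'n::finite \<Rightarrow> 'n"
  assumes cs: "cyclic_succ s" and n3: "CARD('n) \<ge> 3" and nd: "nondegenerate s P"
  shows "tangent_M s P \<subseteq> span (F_values s P \<union> F_brackets s P)"
proof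
  let ?T = "span (F_values s P \<union> F_brackets s P)"
  let ?V = "birkhoff_field s"
  have "range (\<lambda>j. ?V j P) \<subseteq> F_values s P"
    unfolding F_values_def using F_field_birkhoff_field[OF cs n3] by blast
  then have "span (range (\<lambda>j. ?V j P)) \<subseteq> ?T"
    by (intro span_mono) blast
  then have kernel: "{W. midpoint_drift s P W = 0} \<subseteq> ?T"
    using dual_birkhoff_subset_span_birkhoff_fields[OF cs n3 nd]
    unfolding dual_birkhoff_eq_kernel by blast
  have "axis j 1 - axis (s j) 1 \<in> midpoint_drift s P ` ?T" for j
  proof
    let ?q = "det2 (?V j P $ s j) (?V (s j) P $ s j)"
    have "lie_bracket (?V j) (?V (s j)) P \<in> F_brackets s P"
      unfolding F_brackets_def using F_field_birkhoff_field[OF cs n3] by blast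
    then show "(1 / (2 * ?q)) *\<^sub>R lie_bracket (?V j) (?V (s j)) P \<in> ?T"
      by (intro span_scale span_base) blast
    show "axis j 1 - axis (s j) 1
        = midpoint_drift s P ((1 / (2 * ?q)) *\<^sub>R lie_bracket (?V j) (?V (s j)) P)"
      using midpoint_drift_consecutive_bracket[OF cs n3 nd, of j]
        det2_birkhoff_fields_consecutive_nonzero[OF cs n3 nd, of j]
      by (simp add: linear_scale[OF linear_midpoint_drift])
  qed
  then have differences: "range (\<lambda>j. axis j 1 - axis (s j) 1) \<subseteq> midpoint_drift s P ` ?T"
    by blast
  fix W assume "W \<in> tangent_M s P"
  then have "midpoint_drift s P W \<in> span (range (\<lambda>j. axis j 1 - axis (s j) 1))"
    using zero_sum_in_span_cyclic_differences[OF cs] by (simp add: tangent_M_eq[OF cs])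
  then show "W \<in> ?T"
    using linear_vimage_span_subset[OF linear_midpoint_drift subspace_span kernel differences] by blast
qed

theorem theorem2p5:
  fixes s :: "'n::finite \<Rightarrow> 'n" and c :: real and P :: "real^2^'n"
  assumes "CARD('n) \<ge> 3" and "cyclic_succ s" and "c \<noteq> 0" and "P \<in> Mset s c"
  shows "frechet_derivative (area s) (at P) \<noteq> (\<lambda>W. 0)
    \<and> span ({X P | X S. open S \<and> P \<in> S \<and> F_field s S X}
            \<union> {lie_bracket X Y P | X Y S. open S \<and> P \<in> S \<and> F_field s S X \<and> F_field s S Y})
        = tangent_M s P
    \<and> dim (dual_birkhoff s P) = CARD('n)
    \<and> dim (tangent_M s P) = 2 * CARD('n) - 1"
proof -
  have nd: "nondegenerate s P" and "area s P = c"
    using assms(4) by (auto simp: Mset_def)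
  then have "frechet_derivative (area s) (at P) P = 2 * c"
    by (simp add: frechet_derivative_area[OF assms(2)] sum_midpoint_drift_self)
  then have dA_nonzero: "frechet_derivative (area s) (at P) \<noteq> (\<lambda>W. 0)"
    using assms(3) by auto
  have "span (F_values s P \<union> F_brackets s P) = tangent_M s P"
    using span_F_values_F_brackets_subset_tangent_M[OF assms(2)]
      tangent_M_subset_span_F_values_F_brackets[OF assms(2,1) nd] by blast
  moreover have "dim (tangent_M s P) = 2 * CARD('n) - 1"
    using dim_kernel_functional[OF linear_frechet_derivative_area dA_nonzero]
    by (simp add: tangent_M_def mult.commute)
  ultimately show ?thesis
    using dA_nonzero dim_dual_birkhoff[OF assms(2,1) nd]
    unfolding F_values_def F_brackets_def by blast
qed

end
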